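(* Let $\hat\varphi^{(0)},\hat\varphi^{(1)},\hat\varphi^{(2)}$ be the optimal share processes described in the context (which, with consumption $\hat c$, solve $\sup_{c\in\mathcal C}\mathbb E[\int_0^\infty e^{-\delta t}U(c_t)dt]$). Define $$\underline\pi:=\frac{\pi_1(\underline x)}{\pi_1(\underline x)+(1+\overline\lambda)(1-\pi_1(\underline x))},\qquad \overline\pi:=\frac{\pi_1(\overline x)}{\pi_1(\overline x)+(1-\underline\lambda)(1-\pi_1(\overline x))}.$$ Then, almost surely, for all $t\ge0$, $$\underline\pi\le\frac{\hat\varphi^{(1)}_tS^{(1)}_t}{\hat\varphi^{(0)}_t+\hat\varphi^{(1)}_tS^{(1)}_t+\hat\varphi^{(2)}_tS^{(2)}_t}\le\overline\pi.$$ That is, it is optimal to trade the illiquid asset minimally so that the proportion of wealth invested in it stays in $[\underline\pi,\overline\pi]$.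
   Context: Market. - $B^{(1)},B^{(2)}$ are standard Brownian motions with correlation $\rho\in(-1,1)$, and the filtration is the augmented filtration they generate. - $dS^{(i)}_t=S^{(i)}_t(\mu_i\,dt+\sigma_i\,dB^{(i)}_t)$ with $S^{(i)}_0>0$ and constants $\mu_i,\sigma_i>0$, $i=1,2$; the bond has price $1$. - Asset 1 is bought at $\overline S^{(1)}=(1+\overline\lambda)S^{(1)}$ and sold at $\underline S^{(1)}=(1-\underline\lambda)S^{(1)}$, with $\overline\lambda>0$ and $\underline\lambda\in(0,1)$; $\underline y=\ln(1-\underline\lambda)$. - Initial holdings $\eta_0,\eta_1,\eta_2$ satisfy $\eta_0+\underline S^{(1)}_0\eta_1^+-\overline S^{(1)}_0\eta_1^-+S^{(2)}_0\eta_2\ge0$. - $p\in(-\infty,1)\setminus\{0\}$, $U(c)=c^p/p$ for $c>0$, $U(0)=0$ if $p>0$ and $U(0)=-\infty$ if $p<0$; $q=p/(1-p)$; $\delta>0$. Standing assumption: $$\delta>\frac{q}{2(1-\rho^2)}\Big((\tfrac{\mu_1}{\sigma_1})^2+(\tfrac{\mu_2}{\sigma_2})^2-2\rho\tfrac{\mu_1\mu_2}{\sigma_1\sigma_2}\Big),\qquad \mu_1\ne\rho\mu_2\sigma_1/\sigma_2,\qquad \mu_2\ne\rho\sigma_1\sigma_2/(1+q).$$ Admissible consumptions. $\mathcal C$ is the set of nonnegative, right-continuous, locally integrable optional $c$ for which there exist right-continuous optional $(\varphi^{(0)},\varphi^{(1)},\varphi^{(2)})$ with $\varphi^{(i)}_{0-}=\eta_i$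 such that: - $\varphi^{(1)}$ has finite variation; - $\varphi^{(0)}_t+\underline S^{(1)}_t(\varphi^{(1)}_t)^+-\overline S^{(1)}_t(\varphi^{(1)}_t)^-+S^{(2)}_t\varphi^{(2)}_t\ge0$ for all $t\ge0$; - $\varphi^{(0)}_t+\varphi^{(2)}_tS^{(2)}_t=\eta_0+\eta_2S^{(2)}_0+\int_0^t\varphi^{(2)}dS^{(2)}-\int_0^t\overline S^{(1)}d(\varphi^{(1)})^\uparrow+\int_0^t\underline S^{(1)}d(\varphi^{(1)})^\downarrow-\int_0^tc_u\,du$, where $(\varphi^{(1)})^\uparrow$ and $(\varphi^{(1)})^\downarrow$ are the cumulative purchases and sales. Functions. For $s_1\ne-\sigma_1$: $$\theta_1(m,s_1,s_2)=\tfrac{\rho(\sigma_2s_2-\mu_2)}{(1-\rho^2)\sigma_2}-\tfrac{\mu_2s_2-(m+\mu_1+s_1\sigma_1+\frac12(s_1^2+s_2^2))\sigma_2}{(1-\rho^2)\sigma_2(s_1+\sigma_1)},\qquad \theta_2=\tfrac{\mu_2}{\sigma_2}-\rho\theta_1,$$ $$\alpha=(1+q)\delta-\tfrac{q(1+q)}2(\theta_1^2+\theta_2^2+2\rho\theta_1\theta_2),\qquad \beta=q((s_1+\rho s_2)\theta_1+(\rho s_1+s_2)\theta_2),\qquad \gamma=\tfrac12(s_1^2+s_2^2+2\rho s_1s_2).$$ Conditions (G1)–(G5) on $\underline x<\overline x$ and $g\in C^2([\underline x,\overline x])$: - (G1) if $\mu_1>\rho\mu_2\sigma_1/\sigma_2$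 then $0<\underline x<\overline x$, otherwise $\underline x<\overline x<0$. - (G2) $\inf_{m,s_1,s_2}\{-\alpha g(x)-(m+\beta)x+\gamma\frac{x}{g'(x)}+\operatorname{sgn}(p)\}=0$ on $[\underline x,\overline x]$. - (G3) $g'(\underline x)=g'(\overline x)=0$ and $\int_{\underline x}^{\overline x}g'(x)/x\,dx=\log\frac{1+\overline\lambda}{1-\underline\lambda}$. - (G4) $q\,g$, $q\,g(g'+1)-(1+q)xg'$, $q(g-xg')$ and $g'+1$ are strictly positive on $[\underline x,\overline x]$. - (G5) $g'(x)/x>0$ on $(\underline x,\overline x)$. Construction. - $(\hat m,\hat s_1,\hat s_2)(x)$ is the (well-defined) minimizer in (G2); $\hat\alpha,\hat\beta,\hat\gamma,\hat\theta_1,\hat\theta_2$ are the corresponding compositions, e.g. $\hat\alpha(x)=\alpha(\hat m(x),\hat s_1(x),\hat s_2(x))$. - $f(x)=\underline y+\int_x^{\overline x}\frac{g'(t)}t\,dt$, $\xi(x)=\eta_0+\eta_1S^{(1)}_0e^{f(x)}+\eta_2S^{(2)}_0$, and $r(x)=\eta_1S^{(1)}_0e^{f(x)}-\xi(x)\frac{x}{qg(x)}$. - $\hat x=\overline x$ if $r>0$ on $[\underline x,\overline x]$; $\hat x=\underline x$ if $r<0$ there; otherwise $\hat x$ is a root of $r$. - $(X,\Phi)$ is the unique solution of the reflected SDE on $[\underline x,\overline x]$ $$dX_t=(X_t\hat\alpha(X_t)+\tfrac{X_t\hat\beta(X_t)}{g'(X_t)})dt-\tfrac{X_t\hat s_1(X_t)}{g'(X_t)}dB^{(1)}_t-\tfrac{X_t\hat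 s_2(X_t)}{g'(X_t)}dB^{(2)}_t+d\Phi_t,\qquad X_0=\hat x,$$ where $\Phi$ is continuous of finite variation and increases only when $X=\underline x$ and decreases only when $X=\overline x$. - $\tilde S_t=S^{(1)}_te^{f(X_t)}$, and $d\hat H_t/\hat H_t=-\hat\theta_1(X_t)dB^{(1)}_t-\hat\theta_2(X_t)dB^{(2)}_t$ with $\hat H_0=1$. - $$\pi_1(x)=\frac{(1+q)\hat\theta_1(x)-\frac{x\hat s_1(x)}{g(x)}}{\hat s_1(x)+\sigma_1},\qquad \pi_2(x)=\frac1{\sigma_2}\Big((1+q)\hat\theta_2(x)-\frac{x\hat s_2(x)}{g(x)}-\pi_1(x)\hat s_2(x)\Big).$$ - $\hat W_t=\xi(\hat x)e^{-(1+q)\delta t}\hat H_t^{-(1+q)}g(X_t)/g(\hat x)$, $\hat\varphi^{(0)}_t=(1-\pi_1(X_t)-\pi_2(X_t))\hat W_t$, $\hat\varphi^{(1)}_t=\pi_1(X_t)\hat W_t/\tilde S_t$, $\hat\varphi^{(2)}_t=\pi_2(X_t)\hat W_t/S^{(2)}_t$, and $\hat c_t=\hat W_t/|g(X_t)|$. *)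

theory Defs
  imports "HOL-Probability.Probability"
begin

definition qexp :: "real \<Rightarrow> real" where
  "qexp p = p / (1 - p)"

definition theta1 :: "real \<Rightarrow> real \<Rightarrow> real \<Rightarrow> real \<Rightarrow> real \<Rightarrow> real \<Rightarrow> real \<Rightarrow> real \<Rightarrow> real" where
  "theta1 \<rho> \<mu>1 \<mu>2 \<sigma>1 \<sigma>2 m s1 s2 =
     \<rho> * (\<sigma>2 * s2 - \<mu>2) / ((1 - \<rho>^2) * \<sigma>2)
     - (\<mu>2 * s2 - (m + \<mu>1 + s1 * \<sigma>1 + (s1^2 + s2^2) / 2) * \<sigma>2)
       / ((1 - \<rho>^2) * \<sigma>2 * (s1 + \<sigma>1))"

definition theta2 :: "real \<Rightarrow> real \<Rightarrow> real \<Rightarrow> real \<Rightarrow> real \<Rightarrow> real \<Rightarrow> real \<Rightarrow> real \<Rightarrow> real" where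
  "theta2 \<rho> \<mu>1 \<mu>2 \<sigma>1 \<sigma>2 m s1 s2 = \<mu>2 / \<sigma>2 - \<rho> * theta1 \<rho> \<mu>1 \<mu>2 \<sigma>1 \<sigma>2 m s1 s2"

definition alpha :: "real \<Rightarrow> real \<Rightarrow> real \<Rightarrow> real \<Rightarrow> real \<Rightarrow> real \<Rightarrow> real \<Rightarrow> real \<Rightarrow> real \<Rightarrow> real \<Rightarrow> real" where
  "alpha \<rho> \<mu>1 \<mu>2 \<sigma>1 \<sigma>2 p \<delta> m s1 s2 =
     (let q = qexp p; t1 = theta1 \<rho> \<mu>1 \<mu>2 \<sigma>1 \<sigma>2 m s1 s2; t2 = theta2 \<rho> \<mu>1 \<mu>2 \<sigma>1 \<sigma>2 m s1 s2
      in (1 + q) * \<delta> - q * (1 + q) / 2 * (t1^2 + t2^2 + 2 * \<rho> * t1 * t2))"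

definition beta :: "real \<Rightarrow> real \<Rightarrow> real \<Rightarrow> real \<Rightarrow> real \<Rightarrow> real \<Rightarrow> real \<Rightarrow> real \<Rightarrow> real \<Rightarrow> real" where
  "beta \<rho> \<mu>1 \<mu>2 \<sigma>1 \<sigma>2 p m s1 s2 =
     (let q = qexp p; t1 = theta1 \<rho> \<mu>1 \<mu>2 \<sigma>1 \<sigma>2 m s1 s2; t2 = theta2 \<rho> \<mu>1 \<mu>2 \<sigma>1 \<sigma>2 m s1 s2
      in q * ((s1 + \<rho> * s2) * t1 + (\<rho> * s1 + s2) * t2))"

definition gamma :: "real \<Rightarrow> real \<Rightarrow> real \<Rightarrow> real" where
  "gamma \<rho> s1 s2 = (s1^2 + s2^2 + 2 * \<rho> * s1 * s2) / 2"

definition G2dom :: "real \<Rightarrow> (real \<times> real \<times> real) set" where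
  "G2dom \<sigma>1 = {(m, s1, s2). s1 \<noteq> - \<sigma>1}"

text \<open>The term gamma * x / g'(x) is read with the
  natural convention at the endpoints, where g' = 0 (and x/g'(x) tends to +infinity by (G5)):
  it is 0 if gamma = 0 and +infinity otherwise.\<close>
definition G2obj :: "real \<Rightarrow> real \<Rightarrow> real \<Rightarrow> real \<Rightarrow> real \<Rightarrow> real \<Rightarrow> real \<Rightarrow>
    (real \<Rightarrow> real) \<Rightarrow> (real \<Rightarrow> real) \<Rightarrow> real \<Rightarrow> real \<times> real \<times> real \<Rightarrow> ereal" where
  "G2obj \<rho> \<mu>1 \<mu>2 \<sigma>1 \<sigma>2 p \<delta> g g' x z =
     (case z of (m, s1, s2) \<Rightarrow>
       ereal (- alpha \<rho> \<mu>1 \<mu>2 \<sigma>1 \<sigma>2 p \<delta> m s1 s2 * g x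
              - (m + beta \<rho> \<mu>1 \<mu>2 \<sigma>1 \<sigma>2 p m s1 s2) * x + sgn p)
       + (if g' x = 0 then (if gamma \<rho> s1 s2 = 0 then 0 else \<infinity>)
          else ereal (gamma \<rho> s1 s2 * x / g' x)))"

definition G2min :: "real \<Rightarrow> real \<Rightarrow> real \<Rightarrow> real \<Rightarrow> real \<Rightarrow> real \<Rightarrow> real \<Rightarrow>
    (real \<Rightarrow> real) \<Rightarrow> (real \<Rightarrow> real) \<Rightarrow> real \<Rightarrow> real \<times> real \<times> real" where
  "G2min \<rho> \<mu>1 \<mu>2 \<sigma>1 \<sigma>2 p \<delta> g g' x =
     (THE z. z \<in> G2dom \<sigma>1 \<and>
        (\<forall>w \<in> G2dom \<sigma>1. G2obj \<rho> \<mu>1 \<mu>2 \<sigma>1 \<sigma>2 p \<delta> g g' x z \<le> G2obj \<rho> \<mu>1 \<mu>2 \<sigma>1 \<sigma>2 p \<delta> g g' x w))"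

definition pi1 :: "real \<Rightarrow> real \<Rightarrow> real \<Rightarrow> real \<Rightarrow> real \<Rightarrow> real \<Rightarrow> real \<Rightarrow>
    (real \<Rightarrow> real) \<Rightarrow> (real \<Rightarrow> real) \<Rightarrow> real \<Rightarrow> real" where
  "pi1 \<rho> \<mu>1 \<mu>2 \<sigma>1 \<sigma>2 p \<delta> g g' x =
     (case G2min \<rho> \<mu>1 \<mu>2 \<sigma>1 \<sigma>2 p \<delta> g g' x of (m, s1, s2) \<Rightarrow>
       ((1 + qexp p) * theta1 \<rho> \<mu>1 \<mu>2 \<sigma>1 \<sigma>2 m s1 s2 - x * s1 / g x) / (s1 + \<sigma>1))"

definition pi2 :: "real \<Rightarrow> real \<Rightarrow> real \<Rightarrow> real \<Rightarrow> real \<Rightarrow> real \<Rightarrow> real \<Rightarrow>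
    (real \<Rightarrow> real) \<Rightarrow> (real \<Rightarrow> real) \<Rightarrow> real \<Rightarrow> real" where
  "pi2 \<rho> \<mu>1 \<mu>2 \<sigma>1 \<sigma>2 p \<delta> g g' x =
     (case G2min \<rho> \<mu>1 \<mu>2 \<sigma>1 \<sigma>2 p \<delta> g g' x of (m, s1, s2) \<Rightarrow>
       ((1 + qexp p) * theta2 \<rho> \<mu>1 \<mu>2 \<sigma>1 \<sigma>2 m s1 s2 - x * s2 / g x
         - pi1 \<rho> \<mu>1 \<mu>2 \<sigma>1 \<sigma>2 p \<delta> g g' x * s2) / \<sigma>2)"

definition ffun :: "real \<Rightarrow> real \<Rightarrow> (real \<Rightarrow> real) \<Rightarrow> real \<Rightarrow> real" where
  "ffun lamL xu g' x = ln (1 - lamL) + integral {x..xu} (\<lambda>t. g' t / t)"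

end

(*
  Replacing m by t = theta1(m, s1, s2), the objective of (G2) becomes a quadratic polynomial in
  (t, s1, s2) plus the term gamma x / g'(x). Where g'(x) = 0 this term forces s1 = s2 = 0 and the
  rest is strictly convex in t; elsewhere (G4) and (G5) make the whole quadratic positive definite.
  Either way the minimiser is unique and satisfies q (1 + q) g(x) t = x ((1 + q) s1 + sigma1), the
  first-order condition in t, and this is exactly what collapses pi1 to pi1(x) = x / (q g(x)).

  The proportion of wealth in the illiquid asset is then pi1 / (pi1 + e^f (1 - pi1)) at X_t, that
  is 1 / v(X_t) with v(x) = 1 + e^{f(x)} (q g(x) / x - 1). By (G4) v is decreasing, by (G1) it has
  no zero on [xl, xu], and by (G3) e^{f(xl)} = 1 + lamU and e^{f(xu)} = 1 - lamL. As X stays in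
  [xl, xu], the proportion lies between its values at the endpoints, which are the two bounds.
*)

theory Submission
  imports Defs
begin

definition theta1_inv :: "real \<Rightarrow> real \<Rightarrow> real \<Rightarrow> real \<Rightarrow> real \<Rightarrow> real \<Rightarrow> real \<Rightarrow> real \<Rightarrow> real" where
  "theta1_inv \<rho> \<mu>1 \<mu>2 \<sigma>1 \<sigma>2 t s1 s2 =
     (1 - \<rho>^2) * (s1 + \<sigma>1) * t - \<rho> * (s2 - \<mu>2/\<sigma>2) * (s1 + \<sigma>1) + \<mu>2/\<sigma>2 * s2
     - \<mu>1 - s1 * \<sigma>1 - (s1^2 + s2^2) / 2"

lemma theta1_theta1_inv:
  assumes "\<sigma>2 > 0" "\<rho>^2 < 1" "s1 + \<sigma>1 \<noteq> 0"
  shows "theta1 \<rho> \<mu>1 \<mu>2 \<sigma>1 \<sigma>2 (theta1_inv \<rho> \<mu>1 \<mu>2 \<sigma>1 \<sigma>2 t s1 s2) s1 s2 = t"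
proof -
  have "1 - \<rho>^2 \<noteq> 0" using assms(2) by simp
  then show ?thesis using assms unfolding theta1_def theta1_inv_def
    by (simp add: divide_simps) (simp add: algebra_simps power2_eq_square)
qed

lemma theta1_inv_theta1:
  assumes "\<sigma>2 > 0" "\<rho>^2 < 1" "s1 + \<sigma>1 \<noteq> 0"
  shows "theta1_inv \<rho> \<mu>1 \<mu>2 \<sigma>1 \<sigma>2 (theta1 \<rho> \<mu>1 \<mu>2 \<sigma>1 \<sigma>2 m s1 s2) s1 s2 = m"
proof -
  have "1 - \<rho>^2 \<noteq> 0" using assms(2) by simp
  then show ?thesis using assms unfolding theta1_def theta1_inv_def
    by (simp add: divide_simps) (simp add: algebra_simps power2_eq_square)
qed

text \<open>The finite part of the objective of (G2) at a point with \<open>g(x) = G\<close>, in the coordinates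
  \<open>(t, s1, s2)\<close> with \<open>t = theta1\<close>, \<open>a = \<mu>2/\<sigma>2\<close> and \<open>q = qexp p\<close>. The coefficient \<open>c\<close> of
  \<open>2 gamma\<close> is \<open>x/2\<close> from beta, plus \<open>x/(2 g'(x))\<close> once the gamma term of (G2) is added.\<close>

definition G2_poly :: "real \<Rightarrow> real \<Rightarrow> real \<Rightarrow> real \<Rightarrow> real \<Rightarrow> real \<Rightarrow> real \<Rightarrow> real \<Rightarrow> real \<Rightarrow>
    real \<Rightarrow> real \<Rightarrow> real \<Rightarrow> real" where
  "G2_poly q \<delta> G x \<rho> a \<sigma>1 \<mu>1 c t s1 s2 =
     q * (1 + q) * G * (1 - \<rho>^2) / 2 * t^2 - x * (1 - \<rho>^2) * ((1 + q) * s1 + \<sigma>1) * t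
     + c * (s1^2 + s2^2 + 2 * \<rho> * s1 * s2)
     - x * ((\<rho> * a * (1 + q) - \<sigma>1) * s1 + (a * (1 + q) - \<rho> * \<sigma>1) * s2)
     - (1 + q) * \<delta> * G + q * (1 + q) * G * a^2 / 2 - x * (\<rho> * a * \<sigma>1 - \<mu>1)"

definition G2_quad :: "real \<Rightarrow> real \<Rightarrow> real \<Rightarrow> real \<Rightarrow> real \<Rightarrow> real \<Rightarrow> real \<Rightarrow> real \<Rightarrow> real" where
  "G2_quad q G x \<rho> c u v w =
     q * (1 + q) * G * (1 - \<rho>^2) / 2 * u^2 - x * (1 - \<rho>^2) * (1 + q) * u * v
     + c * (v^2 + w^2 + 2 * \<rho> * v * w)"

lemma alpha_beta_eq_G2_poly:
  assumes "\<sigma>2 > 0" "\<rho>^2 < 1" "s1 + \<sigma>1 \<noteq> 0"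
  shows "- alpha \<rho> \<mu>1 \<mu>2 \<sigma>1 \<sigma>2 p \<delta> m s1 s2 * G - (m + beta \<rho> \<mu>1 \<mu>2 \<sigma>1 \<sigma>2 p m s1 s2) * x
    = G2_poly (qexp p) \<delta> G x \<rho> (\<mu>2/\<sigma>2) \<sigma>1 \<mu>1 (x/2) (theta1 \<rho> \<mu>1 \<mu>2 \<sigma>1 \<sigma>2 m s1 s2) s1 s2"
proof -
  define t where "t = theta1 \<rho> \<mu>1 \<mu>2 \<sigma>1 \<sigma>2 m s1 s2"
  have m: "m = theta1_inv \<rho> \<mu>1 \<mu>2 \<sigma>1 \<sigma>2 t s1 s2"
    unfolding t_def using theta1_inv_theta1[OF assms] by simp
  have th2: "theta2 \<rho> \<mu>1 \<mu>2 \<sigma>1 \<sigma>2 m s1 s2 = \<mu>2/\<sigma>2 - \<rho> * t"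
    unfolding theta2_def t_def ..
  define a where "a = \<mu>2/\<sigma>2"
  show ?thesis
    unfolding alpha_def beta_def Let_def t_def[symmetric] th2
    unfolding m theta1_inv_def a_def[symmetric] G2_poly_def
    by (simp add: field_simps) (simp add: algebra_simps power2_eq_square)
qed

lemma G2_poly_add_gamma:
  "G2_poly q \<delta> G x \<rho> a \<sigma>1 \<mu>1 c t s1 s2 + 2 * c' * gamma \<rho> s1 s2
     = G2_poly q \<delta> G x \<rho> a \<sigma>1 \<mu>1 (c + c') t s1 s2"
  unfolding G2_poly_def gamma_def by (simp add: algebra_simps)

lemma G2_poly_taylor:
  "G2_poly q \<delta> G x \<rho> a \<sigma>1 \<mu>1 c (t + u) (s1 + v) (s2 + w) = G2_poly q \<delta> G x \<rho> a \<sigma>1 \<mu>1 c t s1 s2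
     + (1 - \<rho>^2) * (q * (1 + q) * G * t - x * ((1 + q) * s1 + \<sigma>1)) * u
     + (- x * (1 - \<rho>^2) * (1 + q) * t + 2 * c * (s1 + \<rho> * s2) - x * (\<rho> * a * (1 + q) - \<sigma>1)) * v
     + (2 * c * (s2 + \<rho> * s1) - x * (a * (1 + q) - \<rho> * \<sigma>1)) * w
     + G2_quad q G x \<rho> c u v w"
  unfolding G2_poly_def G2_quad_def
  by (simp add: field_simps) (simp add: algebra_simps power2_eq_square)

lemma G2_quad_pos:
  assumes "c > 0" "\<rho>^2 < 1" "1 + q > 0" "2 * c * q * G - x^2 * (1 + q) > 0"
    and "(u, v, w) \<noteq> (0, 0, 0)"
  shows "G2_quad q G x \<rho> c u v w > 0"
proof -
  define k where "k = 1 - \<rho>^2"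
  define D where "D = 2 * c * q * G - x^2 * (1 + q)"
  have k: "k > 0" and D: "D > 0" using assms unfolding k_def D_def by simp_all
  \<comment> \<open>completing the square twice\<close>
  have sos: "4 * c * G2_quad q G x \<rho> c u v w
      = 4 * c^2 * (w + \<rho> * v)^2 + k * (2 * c * v - x * (1 + q) * u)^2 + k * (1 + q) * D * u^2"
    unfolding G2_quad_def k_def D_def by (simp add: field_simps) (simp add: algebra_simps power2_eq_square)
  have t1: "4 * c^2 * (w + \<rho> * v)^2 \<ge> 0" and t2: "k * (2 * c * v - x * (1 + q) * u)^2 \<ge> 0"
    and t3: "k * (1 + q) * D * u^2 \<ge> 0" using k D assms(3) by simp_all
  have "4 * c * G2_quad q G x \<rho> c u v w > 0"
  proof (cases "u = 0")
    case False
    then have "k * (1 + q) * D * u^2 > 0" using k D assms(3) by simp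
    then show ?thesis using sos t1 t2 by linarith
  next
    case u: True
    show ?thesis
    proof (cases "v = 0")
      case False
      then have "k * (2 * c * v - x * (1 + q) * u)^2 > 0" using k assms(1) u by simp
      then show ?thesis using sos t1 t3 by linarith
    next
      case True
      then have "4 * c^2 * (w + \<rho> * v)^2 > 0" using assms(1,5) u by simp
      then show ?thesis using sos t2 t3 by linarith
    qed
  qed
  then show ?thesis using assms(1) by (simp add: zero_less_mult_iff)
qed

lemma gamma_eq_0_iff:
  assumes "\<rho>^2 < 1"
  shows "gamma \<rho> s1 s2 = 0 \<longleftrightarrow> s1 = 0 \<and> s2 = 0"
proof
  assume "gamma \<rho> s1 s2 = 0"
  moreover have "2 * gamma \<rho> s1 s2 = (s1 + \<rho> * s2)^2 + (1 - \<rho>^2) * s2^2"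
    unfolding gamma_def by (simp add: algebra_simps power2_eq_square)
  moreover have "(1 - \<rho>^2) * s2^2 \<ge> 0" using assms by simp
  ultimately have "(1 - \<rho>^2) * s2^2 = 0" "(s1 + \<rho> * s2)^2 = 0"
    by (smt (verit) zero_le_power2)+
  then show "s1 = 0 \<and> s2 = 0" using assms by auto
qed (simp add: gamma_def)

lemma one_plus_qexp_pos: "p < 1 \<Longrightarrow> 1 + qexp p > 0"
  unfolding qexp_def by (simp add: field_simps)

lemma G2obj_eq_G2_poly:
  assumes "\<sigma>2 > 0" "\<rho>^2 < 1" "s1 + \<sigma>1 \<noteq> 0"
  shows "G2obj \<rho> \<mu>1 \<mu>2 \<sigma>1 \<sigma>2 p \<delta> g g' x (m, s1, s2) =
    ereal (G2_poly (qexp p) \<delta> (g x) x \<rho> (\<mu>2/\<sigma>2) \<sigma>1 \<mu>1 (x/2) (theta1 \<rho> \<mu>1 \<mu>2 \<sigma>1 \<sigma>2 m s1 s2) s1 s2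
      + sgn p)
    + (if g' x = 0 then (if gamma \<rho> s1 s2 = 0 then 0 else \<infinity>) else ereal (gamma \<rho> s1 s2 * x / g' x))"
  unfolding G2obj_def prod.case alpha_beta_eq_G2_poly[OF assms] by simp

lemma G2min_eqI:
  assumes "z \<in> G2dom \<sigma>1"
    and "\<And>w. w \<in> G2dom \<sigma>1 \<Longrightarrow> w \<noteq> z \<Longrightarrow>
      G2obj \<rho> \<mu>1 \<mu>2 \<sigma>1 \<sigma>2 p \<delta> g g' x z < G2obj \<rho> \<mu>1 \<mu>2 \<sigma>1 \<sigma>2 p \<delta> g g' x w"
  shows "G2min \<rho> \<mu>1 \<mu>2 \<sigma>1 \<sigma>2 p \<delta> g g' x = z"
  unfolding G2min_def
proof (rule the_equality)
  show "z \<in> G2dom \<sigma>1 \<and> (\<forall>w \<in> G2dom \<sigma>1. G2obj \<rho> \<mu>1 \<mu>2 \<sigma>1 \<sigma>2 p \<delta> g g' x z \<le> G2obj \<rho> \<mu>1 \<mu>2 \<sigma>1 \<sigma>2 p \<delta> g g' x w)"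
    using assms by (metis order.order_iff_strict)
qed (use assms in \<open>metis not_less\<close>)

lemma G2_poly_critical_point:
  assumes "c \<noteq> 0" "q * (1 + q) * G \<noteq> 0" "2 * c * q * G - x^2 * (1 + q) \<noteq> 0"
  obtains t0 s10 s20 where
    "q * (1 + q) * G * t0 = x * ((1 + q) * s10 + \<sigma>1)"
    "s10 + \<sigma>1 = \<sigma>1 * q * ((2 * c - x) * G - x^2) / (2 * c * q * G - x^2 * (1 + q))"
    "\<And>t s1 s2. G2_poly q \<delta> G x \<rho> a \<sigma>1 \<mu>1 c t s1 s2 = G2_poly q \<delta> G x \<rho> a \<sigma>1 \<mu>1 c t0 s10 s20
       + G2_quad q G x \<rho> c (t - t0) (s1 - s10) (s2 - s20)"
proof -
  define D where "D = 2 * c * q * G - x^2 * (1 + q)"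
  define s10 where "s10 = x * \<sigma>1 * (x - q * G) / D"
  define t0 where "t0 = x * ((1 + q) * s10 + \<sigma>1) / (q * (1 + q) * G)"
  define s20 where "s20 = x * (a * (1 + q) - \<rho> * \<sigma>1) / (2 * c) - \<rho> * s10"
  have D: "D \<noteq> 0" using assms(3) unfolding D_def .
  have qG: "q \<noteq> 0" "G \<noteq> 0" using assms(2) by auto
  have foc_t: "q * (1 + q) * G * t0 = x * ((1 + q) * s10 + \<sigma>1)"
    using assms(2) unfolding t0_def by simp
  have Ds: "D * s10 = x * \<sigma>1 * (x - q * G)" unfolding s10_def using D by simp
  have "2 * c * s10 * (q * G) = x * ((1 + q) * t0 - \<sigma>1) * (q * G)"
  proof -
    have "2 * c * s10 * (q * G) = D * s10 + x^2 * (1 + q) * s10" unfolding D_def by (simp add: algebra_simps)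
    also have "\<dots> = x * (q * (1 + q) * G * t0) - x * \<sigma>1 * (q * G)"
      unfolding Ds foc_t by (simp add: algebra_simps power2_eq_square)
    finally show ?thesis by (simp add: algebra_simps)
  qed
  then have foc_s1': "2 * c * s10 = x * ((1 + q) * t0 - \<sigma>1)" using qG by simp
  have foc_s2: "2 * c * (s20 + \<rho> * s10) - x * (a * (1 + q) - \<rho> * \<sigma>1) = 0"
    unfolding s20_def using assms(1) by (simp add: field_simps)
  have foc_s1: "- x * (1 - \<rho>^2) * (1 + q) * t0 + 2 * c * (s10 + \<rho> * s20) - x * (\<rho> * a * (1 + q) - \<sigma>1) = 0"
  proof -
    have "2 * c * (s10 + \<rho> * s20) = (1 - \<rho>^2) * (2 * c * s10) + \<rho> * x * (a * (1 + q) - \<rho> * \<sigma>1)"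
      unfolding s20_def using assms(1) by (simp add: field_simps) (simp add: algebra_simps power2_eq_square)
    then show ?thesis unfolding foc_s1' by (simp add: algebra_simps power2_eq_square)
  qed
  show thesis
  proof (rule that[OF foc_t])
    have "x * (x - q * G) + D = q * ((2 * c - x) * G - x^2)"
      unfolding D_def by (simp add: algebra_simps power2_eq_square)
    moreover have "s10 + \<sigma>1 = \<sigma>1 * (x * (x - q * G) + D) / D"
      unfolding s10_def using D by (simp add: field_simps)
    ultimately show "s10 + \<sigma>1 = \<sigma>1 * q * ((2 * c - x) * G - x^2) / (2 * c * q * G - x^2 * (1 + q))"
      unfolding D_def by (simp add: algebra_simps)
  next
    fix t s1 s2
    show "G2_poly q \<delta> G x \<rho> a \<sigma>1 \<mu>1 c t s1 s2 = G2_poly q \<delta> G x \<rho> a \<sigma>1 \<mu>1 c t0 s10 s20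
       + G2_quad q G x \<rho> c (t - t0) (s1 - s10) (s2 - s20)"
      using G2_poly_taylor[of q \<delta> G x \<rho> a \<sigma>1 \<mu>1 c t0 "t - t0" s10 "s1 - s10" s20 "s2 - s20"]
      unfolding foc_s1 foc_s2 by (simp add: foc_t)
  qed
qed

lemma G2min_flat:
  assumes "\<sigma>1 > 0" "\<sigma>2 > 0" "\<rho>^2 < 1" "p < 1" "qexp p * g x > 0" "g' x = 0"
  shows "G2min \<rho> \<mu>1 \<mu>2 \<sigma>1 \<sigma>2 p \<delta> g g' x
    = (theta1_inv \<rho> \<mu>1 \<mu>2 \<sigma>1 \<sigma>2 (x * \<sigma>1 / (qexp p * (1 + qexp p) * g x)) 0 0, 0, 0)"
    (is "_ = ?z")
proof (rule G2min_eqI)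
  define q where "q = qexp p"
  define G where "G = g x"
  define t0 where "t0 = x * \<sigma>1 / (q * (1 + q) * G)"
  define obj where "obj = G2obj \<rho> \<mu>1 \<mu>2 \<sigma>1 \<sigma>2 p \<delta> g g' x"
  define P where "P = (\<lambda>t. G2_poly q \<delta> G x \<rho> (\<mu>2/\<sigma>2) \<sigma>1 \<mu>1 (x/2) t 0 0)"
  have "0 < q * G * ((1 + q) * (1 - \<rho>^2))"
    using assms(3) one_plus_qexp_pos[OF assms(4)] unfolding q_def G_def
    by (intro mult_pos_pos[OF assms(5)]) simp_all
  then have A: "q * (1 + q) * G * (1 - \<rho>^2) > 0" by (simp add: mult_ac)
  have "q * (1 + q) * G \<noteq> 0" using A by auto
  then have foc: "q * (1 + q) * G * t0 = x * \<sigma>1" unfolding t0_def by simp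
  have P: "P t = P t0 + q * (1 + q) * G * (1 - \<rho>^2) / 2 * (t - t0)^2" for t
    using G2_poly_taylor[of q \<delta> G x \<rho> "\<mu>2/\<sigma>2" \<sigma>1 \<mu>1 "x/2" t0 "t - t0" 0 0 0 0]
    unfolding P_def G2_quad_def by (simp add: foc)
  have s0: "0 + \<sigma>1 \<noteq> 0" using assms(1) by simp
  have obj: "obj (m, s1, s2) = (if s1 = 0 \<and> s2 = 0 then ereal (P (theta1 \<rho> \<mu>1 \<mu>2 \<sigma>1 \<sigma>2 m 0 0) + sgn p)
      else \<infinity>)" if "s1 + \<sigma>1 \<noteq> 0" for m s1 s2
    unfolding obj_def G2obj_eq_G2_poly[OF assms(2,3) that] P_def q_def G_def
    using gamma_eq_0_iff[OF assms(3)] assms(6) by auto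
  have z0: "obj ?z = ereal (P t0 + sgn p)"
    unfolding obj[OF s0] t0_def q_def G_def using theta1_theta1_inv[OF assms(2,3) s0] by simp
  show "?z \<in> G2dom \<sigma>1" unfolding G2dom_def using assms(1) by simp
  fix w assume "w \<in> G2dom \<sigma>1" "w \<noteq> ?z"
  then obtain m s1 s2 where w: "w = (m, s1, s2)" "s1 + \<sigma>1 \<noteq> 0" unfolding G2dom_def by auto
  show "obj ?z < obj w"
  proof (cases "s1 = 0 \<and> s2 = 0")
    case True
    define t where "t = theta1 \<rho> \<mu>1 \<mu>2 \<sigma>1 \<sigma>2 m 0 0"
    have "m = theta1_inv \<rho> \<mu>1 \<mu>2 \<sigma>1 \<sigma>2 t 0 0"
      unfolding t_def using theta1_inv_theta1[OF assms(2,3) s0] by simp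
    then have "t \<noteq> t0" using \<open>w \<noteq> ?z\<close> True w(1) unfolding t0_def q_def G_def by auto
    then have "q * (1 + q) * G * (1 - \<rho>^2) / 2 * (t - t0)^2 > 0" using A by simp
    then show ?thesis unfolding w(1) obj[OF w(2)] z0 P[of t] t_def[symmetric] using True by simp
  qed (auto simp: w obj[OF w(2)] z0)
qed

lemma G2obj_steep_eq:
  assumes "\<sigma>2 > 0" "\<rho>^2 < 1" "s1 + \<sigma>1 \<noteq> 0" "g' x \<noteq> 0"
  shows "G2obj \<rho> \<mu>1 \<mu>2 \<sigma>1 \<sigma>2 p \<delta> g g' x (m, s1, s2) = ereal (G2_poly (qexp p) \<delta> (g x) x \<rho> (\<mu>2/\<sigma>2)
    \<sigma>1 \<mu>1 (x/2 + x / (2 * g' x)) (theta1 \<rho> \<mu>1 \<mu>2 \<sigma>1 \<sigma>2 m s1 s2) s1 s2 + sgn p)"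
proof -
  have "gamma \<rho> s1 s2 * x / g' x = 2 * (x / (2 * g' x)) * gamma \<rho> s1 s2" by simp
  then show ?thesis
    unfolding G2obj_eq_G2_poly[OF assms(1-3)] G2_poly_add_gamma[symmetric] using assms(4) by simp
qed

lemma steep_coefficients_pos:
  assumes "p < 1" "qexp p * g x > 0"
    and "qexp p * g x * (g' x + 1) - (1 + qexp p) * x * g' x > 0"
    and "qexp p * (g x - x * g' x) > 0" "g' x / x > 0"
  defines "c \<equiv> x/2 + x / (2 * g' x)"
  shows "c > 0" "2 * c * qexp p * g x - x^2 * (1 + qexp p) > 0"
    and "qexp p * ((2 * c - x) * g x - x^2) > 0"
proof -
  have g'x: "g' x \<noteq> 0" using assms(5) by auto
  have xg': "x / g' x > 0" using assms(5) by (auto simp add: zero_less_divide_iff)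
  have "2 * c * qexp p * g x - x^2 * (1 + qexp p)
      = x / g' x * (qexp p * g x * (g' x + 1) - (1 + qexp p) * x * g' x)"
    unfolding c_def using g'x by (simp add: field_simps) (simp add: algebra_simps power2_eq_square)
  then show D: "2 * c * qexp p * g x - x^2 * (1 + qexp p) > 0"
    using mult_pos_pos[OF xg' assms(3)] by simp
  have "x^2 * (1 + qexp p) \<ge> 0" using one_plus_qexp_pos[OF assms(1)] by simp
  then have "0 < (2 * c) * (qexp p * g x)" using D by (simp add: mult.assoc)
  then show "c > 0" using assms(2) by (simp add: zero_less_mult_iff)
  have "qexp p * ((2 * c - x) * g x - x^2) = x / g' x * (qexp p * (g x - x * g' x))"
    unfolding c_def using g'x by (simp add: field_simps) (simp add: algebra_simps power2_eq_square)
  then show "qexp p * ((2 * c - x) * g x - x^2) > 0" using mult_pos_pos[OF xg' assms(4)] by simp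
qed

lemma G2min_steep:
  assumes "\<sigma>1 > 0" "\<sigma>2 > 0" "\<rho>^2 < 1" "p < 1" "qexp p * g x > 0"
    and "qexp p * g x * (g' x + 1) - (1 + qexp p) * x * g' x > 0"
    and "qexp p * (g x - x * g' x) > 0" "g' x / x > 0"
  obtains t0 s10 s20 where
    "G2min \<rho> \<mu>1 \<mu>2 \<sigma>1 \<sigma>2 p \<delta> g g' x = (theta1_inv \<rho> \<mu>1 \<mu>2 \<sigma>1 \<sigma>2 t0 s10 s20, s10, s20)"
    "s10 + \<sigma>1 \<noteq> 0" "qexp p * (1 + qexp p) * g x * t0 = x * ((1 + qexp p) * s10 + \<sigma>1)"
proof -
  define q where "q = qexp p"
  define G where "G = g x"
  define c where "c = x/2 + x / (2 * g' x)"
  define D where "D = 2 * c * q * G - x^2 * (1 + q)"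
  define P where "P = G2_poly q \<delta> G x \<rho> (\<mu>2/\<sigma>2) \<sigma>1 \<mu>1 c"
  have q1: "1 + q > 0" using one_plus_qexp_pos[OF assms(4)] unfolding q_def .
  have c: "c > 0" and D: "D > 0" and num: "q * ((2 * c - x) * G - x^2) > 0"
    using steep_coefficients_pos[where g=g and g'=g' and x=x, OF assms(4-8)] unfolding c_def D_def q_def G_def by simp_all
  have "c \<noteq> 0" "q * (1 + q) * G \<noteq> 0" "2 * c * q * G - x^2 * (1 + q) \<noteq> 0"
    using c q1 D assms(5) unfolding D_def q_def G_def by auto
  then obtain t0 s10 s20 where foc: "q * (1 + q) * G * t0 = x * ((1 + q) * s10 + \<sigma>1)"
    and s10: "s10 + \<sigma>1 = \<sigma>1 * q * ((2 * c - x) * G - x^2) / D"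
    and expand: "\<And>t s1 s2. P t s1 s2 = P t0 s10 s20 + G2_quad q G x \<rho> c (t - t0) (s1 - s10) (s2 - s20)"
    unfolding D_def P_def by (rule G2_poly_critical_point[of c q G x \<sigma>1 \<delta> \<rho> "\<mu>2/\<sigma>2" \<mu>1]) blast
  have "s10 + \<sigma>1 > 0" unfolding s10 using assms(1) num D by (simp add: mult.assoc)
  then have s10_ne: "s10 + \<sigma>1 \<noteq> 0" by simp
  have g'x: "g' x \<noteq> 0" using assms(8) by auto
  show thesis
  proof (rule that)
    show "G2min \<rho> \<mu>1 \<mu>2 \<sigma>1 \<sigma>2 p \<delta> g g' x = (theta1_inv \<rho> \<mu>1 \<mu>2 \<sigma>1 \<sigma>2 t0 s10 s20, s10, s20)"
    proof (rule G2min_eqI)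
      show "(theta1_inv \<rho> \<mu>1 \<mu>2 \<sigma>1 \<sigma>2 t0 s10 s20, s10, s20) \<in> G2dom \<sigma>1"
        unfolding G2dom_def using s10_ne by simp
      fix w assume "w \<in> G2dom \<sigma>1"
        and w_ne: "w \<noteq> (theta1_inv \<rho> \<mu>1 \<mu>2 \<sigma>1 \<sigma>2 t0 s10 s20, s10, s20)"
      then obtain m s1 s2 where w: "w = (m, s1, s2)" "s1 + \<sigma>1 \<noteq> 0" unfolding G2dom_def by auto
      have "m = theta1_inv \<rho> \<mu>1 \<mu>2 \<sigma>1 \<sigma>2 (theta1 \<rho> \<mu>1 \<mu>2 \<sigma>1 \<sigma>2 m s1 s2) s1 s2"
        using theta1_inv_theta1[OF assms(2,3) w(2)] by simp
      then have "(theta1 \<rho> \<mu>1 \<mu>2 \<sigma>1 \<sigma>2 m s1 s2 - t0, s1 - s10, s2 - s20) \<noteq> (0, 0, 0)"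
        using w_ne w(1) by auto
      then have "G2_quad q G x \<rho> c (theta1 \<rho> \<mu>1 \<mu>2 \<sigma>1 \<sigma>2 m s1 s2 - t0) (s1 - s10) (s2 - s20) > 0"
        using G2_quad_pos[OF c assms(3) q1] D unfolding D_def by blast
      then show "G2obj \<rho> \<mu>1 \<mu>2 \<sigma>1 \<sigma>2 p \<delta> g g' x (theta1_inv \<rho> \<mu>1 \<mu>2 \<sigma>1 \<sigma>2 t0 s10 s20, s10, s20)
          < G2obj \<rho> \<mu>1 \<mu>2 \<sigma>1 \<sigma>2 p \<delta> g g' x w"
        unfolding w(1) G2obj_steep_eq[where g'=g' and x=x, OF assms(2,3) s10_ne g'x] G2obj_steep_eq[where g'=g' and x=x, OF assms(2,3) w(2) g'x]
          theta1_theta1_inv[OF assms(2,3) s10_ne]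
        using expand[of "theta1 \<rho> \<mu>1 \<mu>2 \<sigma>1 \<sigma>2 m s1 s2" s1 s2]
        unfolding P_def c_def q_def G_def by simp
    qed
  qed (use s10_ne foc in \<open>simp_all add: q_def G_def\<close>)
qed

lemma G2min_first_order:
  assumes "\<sigma>1 > 0" "\<sigma>2 > 0" "\<rho>^2 < 1" "p < 1" "qexp p * g x > 0"
    and "qexp p * g x * (g' x + 1) - (1 + qexp p) * x * g' x > 0"
    and "qexp p * (g x - x * g' x) > 0" "x \<noteq> 0" "g' x / x \<ge> 0"
  obtains t s1 s2 where
    "G2min \<rho> \<mu>1 \<mu>2 \<sigma>1 \<sigma>2 p \<delta> g g' x = (theta1_inv \<rho> \<mu>1 \<mu>2 \<sigma>1 \<sigma>2 t s1 s2, s1, s2)"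
    "s1 + \<sigma>1 \<noteq> 0" "qexp p * (1 + qexp p) * g x * t = x * ((1 + qexp p) * s1 + \<sigma>1)"
proof (cases "g' x = 0")
  case True
  have "qexp p * (1 + qexp p) * g x \<noteq> 0"
    using assms(5) one_plus_qexp_pos[OF assms(4)] by auto
  then show thesis
    using that[OF G2min_flat[where g=g and g'=g' and x=x, OF assms(1-5) True]] assms(1) by simp
next
  case False
  then have "g' x / x > 0" using assms(8,9) by (metis divide_eq_0_iff order_le_less)
  then show thesis using G2min_steep[where g=g and g'=g' and x=x, OF assms(1-7)] that by blast
qed

lemma pi1_eq:
  assumes "\<sigma>1 > 0" "\<sigma>2 > 0" "\<rho>^2 < 1" "p < 1" "qexp p * g x > 0"
    and "qexp p * g x * (g' x + 1) - (1 + qexp p) * x * g' x > 0"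
    and "qexp p * (g x - x * g' x) > 0" "x \<noteq> 0" "g' x / x \<ge> 0"
  shows "pi1 \<rho> \<mu>1 \<mu>2 \<sigma>1 \<sigma>2 p \<delta> g g' x = x / (qexp p * g x)"
proof -
  define q where "q = qexp p"
  define G where "G = g x"
  obtain t s1 s2 where
    min: "G2min \<rho> \<mu>1 \<mu>2 \<sigma>1 \<sigma>2 p \<delta> g g' x = (theta1_inv \<rho> \<mu>1 \<mu>2 \<sigma>1 \<sigma>2 t s1 s2, s1, s2)"
    and s1: "s1 + \<sigma>1 \<noteq> 0" and foc: "q * (1 + q) * G * t = x * ((1 + q) * s1 + \<sigma>1)"
    using G2min_first_order[where g=g and g'=g' and x=x, OF assms] unfolding q_def G_def by blast
  have qG: "q \<noteq> 0" "G \<noteq> 0" "1 + q \<noteq> 0"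
    using assms(5) one_plus_qexp_pos[OF assms(4)] unfolding q_def G_def by auto
  have "(1 + q) * t = x * ((1 + q) * s1 + \<sigma>1) / (q * G)"
    using foc qG by (simp add: field_simps)
  then have "(1 + q) * t - x * s1 / G = x * (s1 + \<sigma>1) / (q * G)"
    using qG by (simp add: field_simps)
  then have "((1 + q) * t - x * s1 / G) / (s1 + \<sigma>1) = x / (q * G)"
    using s1 by simp
  then show ?thesis
    unfolding pi1_def min prod.case theta1_theta1_inv[OF assms(2,3) s1] q_def G_def .
qed

lemma antimono_on_Icc_if_derivative_nonpos:
  fixes f f' :: "real \<Rightarrow> real"
  assumes deriv: "\<And>x. x \<in> {a..b} \<Longrightarrow> (f has_real_derivative f' x) (at x within {a..b})"
    and nonpos: "\<And>x. x \<in> {a..b} \<Longrightarrow> f' x \<le> 0" and "a \<le> x" "x \<le> y" "y \<le> b"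
  shows "f y \<le> f x"
proof (rule DERIV_nonpos_imp_decreasing_open[OF \<open>x \<le> y\<close>])
  fix z assume z: "x < z" "z < y"
  then have "a < z" "z < b" using assms by auto
  then have "(f has_real_derivative f' z) (at z)"
    using deriv[of z] at_within_Icc_at[of a z b] by simp
  then show "\<exists>d. (f has_real_derivative d) (at z) \<and> d \<le> 0" using nonpos \<open>a < z\<close> \<open>z < b\<close> by auto
next
  have "continuous_on {a..b} f" by (rule DERIV_continuous_on) (use deriv in blast)
  then show "continuous_on {x..y} f" by (rule continuous_on_subset) (use assms in auto)
qed

lemma illiquid_share_eq:
  fixes W E S1 S2 \<pi>1 \<pi>2 :: real
  assumes "W \<noteq> 0" "E > 0" "S1 > 0" "S2 > 0"
  shows "(\<pi>1 * W / (S1 * E)) * S1 / ((1 - \<pi>1 - \<pi>2) * W + (\<pi>1 * W / (S1 * E)) * S1 + (\<pi>2 * W / S2) * S2)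
    = \<pi>1 / (\<pi>1 + E * (1 - \<pi>1))"
proof -
  have "(1 - \<pi>1 - \<pi>2) * W + (\<pi>1 * W / (S1 * E)) * S1 + (\<pi>2 * W / S2) * S2 = W * (\<pi>1 + E * (1 - \<pi>1)) / E"
    using assms by (simp add: field_simps)
  moreover have "(\<pi>1 * W / (S1 * E)) * S1 = W * \<pi>1 / E" using assms by simp
  ultimately show ?thesis using assms by simp
qed

lemma initial_wealth_pos:
  fixes \<eta>0 \<eta>1 \<eta>2 S10 S20 lamL lamU E :: real
  assumes "\<eta>0 + (1 - lamL) * S10 * max \<eta>1 0 - (1 + lamU) * S10 * max (- \<eta>1) 0 + S20 * \<eta>2 > 0"
    and "S10 > 0" "1 - lamL \<le> E" "E \<le> 1 + lamU"
  shows "\<eta>0 + \<eta>1 * S10 * E + \<eta>2 * S20 > 0"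
proof (cases "\<eta>1 \<ge> 0")
  case True
  then have "\<eta>1 * S10 * (1 - lamL) \<le> \<eta>1 * S10 * E"
    using assms(2) by (intro mult_left_mono[OF assms(3)]) simp
  then show ?thesis using assms(1) True by (simp add: algebra_simps)
next
  case False
  then have "\<eta>1 * S10 * (1 + lamU) \<le> \<eta>1 * S10 * E"
    using assms(2,4) by (simp add: mult_left_mono_neg mult_nonpos_nonneg)
  then show ?thesis using assms(1) False by (simp add: algebra_simps)
qed

text \<open>The hypotheses (G1)--(G5) on \<open>g\<close>, except (G2): the minimiser of (G2) is computed
  explicitly above, so the value of the infimum is not needed.\<close>

locale free_boundary_solution =
  fixes \<rho> \<mu>1 \<mu>2 \<sigma>1 \<sigma>2 p \<delta> lamU lamL xl xu :: real and g g' :: "real \<Rightarrow> real"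
  assumes sigma_pos: "\<sigma>1 > 0" "\<sigma>2 > 0" and rho: "\<rho>^2 < 1" and p: "p < 1"
    and lam: "lamU > 0" "0 < lamL" "lamL < 1"
    and xl_less_xu: "xl < xu" and sign: "0 < xl \<or> xu < 0"
    and deriv_g: "\<And>x. x \<in> {xl..xu} \<Longrightarrow> (g has_real_derivative g' x) (at x within {xl..xu})"
    and cont_g': "continuous_on {xl..xu} g'"
    and G3: "g' xl = 0" "g' xu = 0" "integral {xl..xu} (\<lambda>x. g' x / x) = ln ((1 + lamU) / (1 - lamL))"
    and G4: "\<And>x. x \<in> {xl..xu} \<Longrightarrow> qexp p * g x > 0"
      "\<And>x. x \<in> {xl..xu} \<Longrightarrow> qexp p * g x * (g' x + 1) - (1 + qexp p) * x * g' x > 0"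
      "\<And>x. x \<in> {xl..xu} \<Longrightarrow> qexp p * (g x - x * g' x) > 0"
    and G5: "\<And>x. x \<in> {xl<..<xu} \<Longrightarrow> g' x / x > 0"
begin

lemma x_nonzero: "x \<in> {xl..xu} \<Longrightarrow> x \<noteq> 0"
  using sign by auto

lemma g_nonzero: "x \<in> {xl..xu} \<Longrightarrow> g x \<noteq> 0"
  using G4(1) by fastforce

lemma g'_div_nonneg: "x \<in> {xl..xu} \<Longrightarrow> g' x / x \<ge> 0"
  using G3(1,2) G5[of x] by (cases "x = xl \<or> x = xu") (auto simp: less_imp_le)

lemma pi1_eq_on: "x \<in> {xl..xu} \<Longrightarrow> pi1 \<rho> \<mu>1 \<mu>2 \<sigma>1 \<sigma>2 p \<delta> g g' x = x / (qexp p * g x)"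
  by (rule pi1_eq[OF sigma_pos rho p G4 x_nonzero g'_div_nonneg])

lemma ffun_derivative:
  assumes "x \<in> {xl..xu}"
  shows "(ffun lamL xu g' has_real_derivative - (g' x / x)) (at x within {xl..xu})"
proof -
  have "continuous_on {xl..xu} (\<lambda>t. g' t / t)"
    using x_nonzero by (intro continuous_intros cont_g') auto
  from integral_has_real_derivative'[OF this assms]
  have "((\<lambda>x. ln (1 - lamL) + integral {x..xu} (\<lambda>t. g' t / t)) has_real_derivative 0 + - (g' x / x))
      (at x within {xl..xu})"
    by (intro derivative_intros)
  then show ?thesis unfolding ffun_def by simp
qed

lemma exp_ffun_xu: "exp (ffun lamL xu g' xu) = 1 - lamL"
  unfolding ffun_def using lam by simp

lemma exp_ffun_xl: "exp (ffun lamL xu g' xl) = 1 + lamU"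
  unfolding ffun_def G3(3) using lam by (simp add: exp_add)

lemma exp_ffun_bounds:
  assumes "x \<in> {xl..xu}"
  shows "1 - lamL \<le> exp (ffun lamL xu g' x)" "exp (ffun lamL xu g' x) \<le> 1 + lamU"
proof -
  have antimono: "ffun lamL xu g' y \<le> ffun lamL xu g' x" if "xl \<le> x" "x \<le> y" "y \<le> xu" for x y
    using antimono_on_Icc_if_derivative_nonpos[OF ffun_derivative _ that] g'_div_nonneg by simp
  show "1 - lamL \<le> exp (ffun lamL xu g' x)"
    using antimono[of x xu] assms unfolding exp_ffun_xu[symmetric] by simp
  show "exp (ffun lamL xu g' x) \<le> 1 + lamU"
    using antimono[of xl x] assms unfolding exp_ffun_xl[symmetric] by simp
qed

definition inv_share :: "real \<Rightarrow> real" where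
  "inv_share x = 1 + exp (ffun lamL xu g' x) * (qexp p * g x / x - 1)"

lemma share_eq_inverse:
  assumes "x \<in> {xl..xu}"
  defines "\<pi> \<equiv> pi1 \<rho> \<mu>1 \<mu>2 \<sigma>1 \<sigma>2 p \<delta> g g' x"
  shows "\<pi> / (\<pi> + exp (ffun lamL xu g' x) * (1 - \<pi>)) = 1 / inv_share x"
proof -
  have \<pi>: "\<pi> = x / (qexp p * g x)" unfolding \<pi>_def by (rule pi1_eq_on[OF assms(1)])
  have ne: "x \<noteq> 0" "qexp p * g x \<noteq> 0" using x_nonzero G4(1) assms(1) by fastforce+
  then have "\<pi> + exp (ffun lamL xu g' x) * (1 - \<pi>) = \<pi> * inv_share x"
    unfolding \<pi> inv_share_def by (simp add: field_simps)
  moreover have "\<pi> \<noteq> 0" unfolding \<pi> using ne by simp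
  ultimately show ?thesis by simp
qed

lemma inv_share_antimono:
  assumes "xl \<le> x" "x \<le> y" "y \<le> xu"
  shows "inv_share y \<le> inv_share x"
proof (rule antimono_on_Icc_if_derivative_nonpos[OF _ _ assms])
  fix z assume z: "z \<in> {xl..xu}"
  define d where "d = qexp p * g z * (g' z + 1) - (1 + qexp p) * z * g' z"
  show "(inv_share has_real_derivative - exp (ffun lamL xu g' z) / z^2 * d) (at z within {xl..xu})"
    unfolding inv_share_def[abs_def] d_def
    apply (rule derivative_eq_intros ffun_derivative[OF z] deriv_g[OF z] refl | simp add: x_nonzero[OF z])+
    using x_nonzero[OF z] by (simp add: field_simps power2_eq_square)
  show "- exp (ffun lamL xu g' z) / z^2 * d \<le> 0"
    using G4(2)[OF z] unfolding d_def by (simp add: mult_nonneg_nonneg)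
qed

lemma inv_share_same_sign:
  assumes "x \<in> {xl..xu}"
  shows "0 < inv_share xl * inv_share x" "0 < inv_share x * inv_share xu"
proof -
  have mono: "inv_share xu \<le> inv_share x" "inv_share x \<le> inv_share xl"
    using inv_share_antimono assms by auto
  consider "0 < xl" | "xu < 0" using sign by blast
  then have "0 < inv_share xu \<or> inv_share xl < 0"
  proof cases
    case 1
    then have "0 < qexp p * g xu / xu" using G4(1)[of xu] xl_less_xu by simp
    then have "0 < (1 - lamL) * (qexp p * g xu / xu)" using lam by (intro mult_pos_pos) simp_all
    then have "0 < lamL + (1 - lamL) * (qexp p * g xu / xu)" using lam by linarith
    then show ?thesis unfolding inv_share_def exp_ffun_xu by (simp add: algebra_simps)
  next
    case 2
    then have "qexp p * g xl / xl < 0" using G4(1)[of xl] xl_less_xu by (simp add: divide_pos_neg)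
    then have "(1 + lamU) * (qexp p * g xl / xl) < 0" using lam by (intro mult_pos_neg) simp_all
    then have "- lamU + (1 + lamU) * (qexp p * g xl / xl) < 0" using lam by linarith
    then show ?thesis unfolding inv_share_def exp_ffun_xl by (simp add: algebra_simps)
  qed
  then show "0 < inv_share xl * inv_share x" "0 < inv_share x * inv_share xu"
    using mono by (auto intro: mult_pos_pos mult_neg_neg)
qed

lemma share_bounds:
  assumes "x \<in> {xl..xu}"
  defines "\<pi>1 \<equiv> pi1 \<rho> \<mu>1 \<mu>2 \<sigma>1 \<sigma>2 p \<delta> g g'" and "E \<equiv> exp (ffun lamL xu g' x)"
  shows "\<pi>1 xl / (\<pi>1 xl + (1 + lamU) * (1 - \<pi>1 xl)) \<le> \<pi>1 x / (\<pi>1 x + E * (1 - \<pi>1 x))"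
    and "\<pi>1 x / (\<pi>1 x + E * (1 - \<pi>1 x)) \<le> \<pi>1 xu / (\<pi>1 xu + (1 - lamL) * (1 - \<pi>1 xu))"
proof -
  have ends: "xl \<in> {xl..xu}" "xu \<in> {xl..xu}" using xl_less_xu by auto
  have "1 / inv_share xl \<le> 1 / inv_share x" "1 / inv_share x \<le> 1 / inv_share xu"
    using inv_share_same_sign[OF assms(1)] inv_share_antimono assms(1)
    by (auto intro!: divide_left_mono)
  then show "\<pi>1 xl / (\<pi>1 xl + (1 + lamU) * (1 - \<pi>1 xl)) \<le> \<pi>1 x / (\<pi>1 x + E * (1 - \<pi>1 x))"
    and "\<pi>1 x / (\<pi>1 x + E * (1 - \<pi>1 x)) \<le> \<pi>1 xu / (\<pi>1 xu + (1 - lamL) * (1 - \<pi>1 xu))"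
    unfolding \<pi>1_def E_def share_eq_inverse[OF assms(1)]
      share_eq_inverse[OF ends(1), unfolded exp_ffun_xl] share_eq_inverse[OF ends(2), unfolded exp_ffun_xu]
    by simp_all
qed

end

theorem corollary4p6:
  fixes \<rho> \<mu>1 \<mu>2 \<sigma>1 \<sigma>2 lamU lamL p \<delta> \<eta>0 \<eta>1 \<eta>2 S10 S20 xl xu xhat :: real
    and g g' g'' :: "real \<Rightarrow> real"
    and M :: "'w measure"
    and S1 S2 H X :: "real \<Rightarrow> 'w \<Rightarrow> real"
  assumes rho: "-1 < \<rho>" "\<rho> < 1"
    and sig: "\<sigma>1 > 0" "\<sigma>2 > 0"
    and S0pos: "S10 > 0" "S20 > 0"
    and lam: "lamU > 0" "0 < lamL" "lamL < 1"
    and pp: "p < 1" "p \<noteq> 0"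
    and standing1: "\<delta> > qexp p / (2 * (1 - \<rho>^2)) *
        ((\<mu>1/\<sigma>1)^2 + (\<mu>2/\<sigma>2)^2 - 2 * \<rho> * \<mu>1 * \<mu>2 / (\<sigma>1 * \<sigma>2))"
    and standing2: "\<mu>1 \<noteq> \<rho> * \<mu>2 * \<sigma>1 / \<sigma>2"
    and standing3: "\<mu>2 \<noteq> \<rho> * \<sigma>1 * \<sigma>2 / (1 + qexp p)"
    and solvent: "\<eta>0 + (1 - lamL) * S10 * max \<eta>1 0 - (1 + lamU) * S10 * max (- \<eta>1) 0 + S20 * \<eta>2 > 0"
    and xlu: "xl < xu"
    and dg: "\<And>x. x \<in> {xl..xu} \<Longrightarrow> (g has_real_derivative g' x) (at x within {xl..xu})"
    and dg': "\<And>x. x \<in> {xl..xu} \<Longrightarrow> (g' has_real_derivative g'' x) (at x within {xl..xu})"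
    and cg'': "continuous_on {xl..xu} g''"
    and G1: "if \<mu>1 > \<rho> * \<mu>2 * \<sigma>1 / \<sigma>2 then 0 < xl \<and> xl < xu else xl < xu \<and> xu < 0"
    and G2: "\<And>x. x \<in> {xl..xu} \<Longrightarrow>
        (INF z \<in> G2dom \<sigma>1. G2obj \<rho> \<mu>1 \<mu>2 \<sigma>1 \<sigma>2 p \<delta> g g' x z) = 0"
    and G3: "g' xl = 0" "g' xu = 0"
        "integral {xl..xu} (\<lambda>x. g' x / x) = ln ((1 + lamU) / (1 - lamL))"
    and G4: "\<And>x. x \<in> {xl..xu} \<Longrightarrow>
        qexp p * g x > 0 \<and>
        qexp p * g x * (g' x + 1) - (1 + qexp p) * x * g' x > 0 \<and>
        qexp p * (g x - x * g' x) > 0 \<and> g' x + 1 > 0"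
    and G5: "\<And>x. x \<in> {xl<..<xu} \<Longrightarrow> g' x / x > 0"
    and xhat: "let \<xi> = (\<lambda>x. \<eta>0 + \<eta>1 * S10 * exp (ffun lamL xu g' x) + \<eta>2 * S20);
                   r = (\<lambda>x. \<eta>1 * S10 * exp (ffun lamL xu g' x) - \<xi> x * x / (qexp p * g x))
               in (if (\<forall>x \<in> {xl..xu}. r x > 0) then xhat = xu
                   else if (\<forall>x \<in> {xl..xu}. r x < 0) then xhat = xl
                   else xhat \<in> {xl..xu} \<and> r xhat = 0)"
    and prob: "prob_space M"
    and Spos: "AE \<omega> in M. \<forall>t\<ge>0. S1 t \<omega> > 0 \<and> S2 t \<omega> > 0"
    and Hpos: "AE \<omega> in M. \<forall>t\<ge>0. H t \<omega> > 0"
    and X0: "AE \<omega> in M. X 0 \<omega> = xhat"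
    and Xrange: "AE \<omega> in M. \<forall>t\<ge>0. X t \<omega> \<in> {xl..xu}"
  shows
    "let q = qexp p;
         f = ffun lamL xu g';
         \<pi>1 = pi1 \<rho> \<mu>1 \<mu>2 \<sigma>1 \<sigma>2 p \<delta> g g';
         \<pi>2 = pi2 \<rho> \<mu>1 \<mu>2 \<sigma>1 \<sigma>2 p \<delta> g g';
         \<xi> = (\<lambda>x. \<eta>0 + \<eta>1 * S10 * exp (f x) + \<eta>2 * S20);
         W = (\<lambda>t \<omega>. \<xi> xhat * exp (- (1 + q) * \<delta> * t) * H t \<omega> powr (- (1 + q))
                       * g (X t \<omega>) / g xhat);
         St = (\<lambda>t \<omega>. S1 t \<omega> * exp (f (X t \<omega>)));
         \<phi>0 = (\<lambda>t \<omega>. (1 - \<pi>1 (X t \<omega>) - \<pi>2 (X t \<omega>)) * W t \<omega>);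
         \<phi>1 = (\<lambda>t \<omega>. \<pi>1 (X t \<omega>) * W t \<omega> / St t \<omega>);
         \<phi>2 = (\<lambda>t \<omega>. \<pi>2 (X t \<omega>) * W t \<omega> / S2 t \<omega>);
         \<pi>lo = \<pi>1 xl / (\<pi>1 xl + (1 + lamU) * (1 - \<pi>1 xl));
         \<pi>hi = \<pi>1 xu / (\<pi>1 xu + (1 - lamL) * (1 - \<pi>1 xu))
     in AE \<omega> in M. \<forall>t\<ge>0.
          \<pi>lo \<le> \<phi>1 t \<omega> * S1 t \<omega> / (\<phi>0 t \<omega> + \<phi>1 t \<omega> * S1 t \<omega> + \<phi>2 t \<omega> * S2 t \<omega>) \<and>
          \<phi>1 t \<omega> * S1 t \<omega> / (\<phi>0 t \<omega> + \<phi>1 t \<omega> * S1 t \<omega> + \<phi>2 t \<omega> * S2 t \<omega>) \<le> \<pi>hi"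
proof -
  interpret free_boundary_solution \<rho> \<mu>1 \<mu>2 \<sigma>1 \<sigma>2 p \<delta> lamU lamL xl xu g g'
  proof
    show "\<rho>^2 < 1" using rho by (simp add: abs_square_less_1)
    show "0 < xl \<or> xu < 0" using G1 by (auto split: if_splits)
    show "continuous_on {xl..xu} g'" by (rule DERIV_continuous_on) (use dg' in blast)
  qed (use sig pp lam xlu dg G3 G4 G5 in blast)+
  have xhat_in: "xhat \<in> {xl..xu}" using xhat xlu unfolding Let_def by (auto split: if_splits)
  have wealth: "\<eta>0 + \<eta>1 * S10 * exp (ffun lamL xu g' xhat) + \<eta>2 * S20 > 0"
    using initial_wealth_pos[OF solvent S0pos(1) exp_ffun_bounds[OF xhat_in]] .
  show ?thesis unfolding Let_def using Spos Hpos Xrange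
  proof eventually_elim
    case (elim \<omega>)
    show ?case
    proof (intro allI impI, goal_cases)
      case (1 t)
      then have X: "X t \<omega> \<in> {xl..xu}" and S: "S1 t \<omega> > 0" "S2 t \<omega> > 0" and "H t \<omega> > 0"
        using elim by auto
      then have W: "(\<eta>0 + \<eta>1 * S10 * exp (ffun lamL xu g' xhat) + \<eta>2 * S20) * exp (- (1 + qexp p) * \<delta> * t)
          * H t \<omega> powr - (1 + qexp p) * g (X t \<omega>) / g xhat \<noteq> 0"
        using wealth g_nonzero[OF X] g_nonzero[OF xhat_in] by simp
      from share_bounds[OF X] show ?case
        unfolding illiquid_share_eq[OF W exp_gt_zero S] by simp
    qed
  qed
qed

end
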